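(* Let $H_X\in\mathbb{F}_2^{m_X\times n}$ and $H_Z\in\mathbb{F}_2^{m_Z\times n}$, and let $k=n-\mathrm{rank}(H_X)-\mathrm{rank}(H_Z)$. Let $P\ge1$ and let $\hat H_X\in\mathbb{F}_2^{Pm_X\times Pn}$, $\hat H_Z\in\mathbb{F}_2^{Pm_Z\times Pn}$ be obtained by replacing each nonzero entry of $H_X$ and $H_Z$ by some $P\times P$ permutation matrix and each zero entry by the $P\times P$ zero matrix, and assume $\hat H_X\hat H_Z^{\mathsf T}=0$ over $\mathbb{F}_2$. Let $\hat k=Pn-\mathrm{rank}(\hat H_X)-\mathrm{rank}(\hat H_Z)$. Then \[ \hat k\ge k+(P-1)(n-m_X-m_Z). \] In particular, if $n=m_X+m_Z$, then $\hat k\ge k$.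
   Context: All ranks are over $\mathbb{F}_2$. The permutation matrices used for different entries may differ. *)

theory Defs
  imports "HOL-Library.Z2" "Jordan_Normal_Form.DL_Rank" "HOL-Combinatorics.Permutations"
begin

definition rk :: "bit mat \<Rightarrow> nat" where
  "rk A = vec_space.rank (dim_row A) A"

definition is_perm_lift :: "nat \<Rightarrow> bit mat \<Rightarrow> bit mat \<Rightarrow> bool" where
  "is_perm_lift P H Hh \<longleftrightarrow>
     Hh \<in> carrier_mat (P * dim_row H) (P * dim_col H) \<and>
     (\<exists>\<sigma> :: nat \<Rightarrow> nat \<Rightarrow> nat \<Rightarrow> nat.
        \<forall>a < dim_row H. \<forall>b < dim_col H.
          (H $$ (a, b) \<noteq> 0 \<longrightarrow> \<sigma> a b permutes {..<P}) \<and>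
          (\<forall>r < P. \<forall>c < P.
             Hh $$ (a * P + r, b * P + c) =
               (if H $$ (a, b) = 0 then 0 else if \<sigma> a b r = c then 1 else 0)))"

end

theory Submission
  imports Defs
begin

text \<open>Summing the P rows of block row a of a permutation lift Hh of H gives row a of H with every
  entry repeated P times, because a permutation matrix has exactly one 1 in each column; in matrix
  form, S_m Hh = H S_n for the block-summing matrices S. The first row of each block is the
  block sum minus the other P - 1 rows of the block, so the rows of Hh lie in the span of the m
  rows of H S_n, of dimension at most rk H, together with the remaining (P - 1) m rows of Hh.
  Hence rk Hh \<le> rk H + (P - 1) m for both lifts, and the bound on the dimension of the lifted code
  is arithmetic.\<close>

lemma rank_mat_mult_le_right:
  fixes A :: "'a::field mat"
  assumes A: "A \<in> carrier_mat n k" and B: "B \<in> carrier_mat k nc"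
  shows "vec_space.rank n (A * B) \<le> vec_space.rank k B"
proof -
  interpret N: vec_space "TYPE('a)" n .
  interpret K: vec_space "TYPE('a)" k .
  have AB: "A * B \<in> carrier_mat n nc" using A B by auto
  obtain S where max: "maximal S (\<lambda>T. T \<subseteq> set (cols (A * B)) \<and> N.lin_indpt T)"
    using maximal_exists[of "\<lambda>T. T \<subseteq> set (cols (A * B)) \<and> N.lin_indpt T" "card (set (cols (A * B)))" "{}"]
    by (meson List.finite_set card_mono empty_iff empty_subsetI N.finite_lin_indpt2 rev_finite_subset)
  then have S: "S \<subseteq> set (cols (A * B))" "N.lin_indpt S" by (auto simp: maximal_def)
  have "cols (A * B) = map ((*\<^sub>v) A) (cols B)"
    using A B by (intro nth_equalityI) auto
  then have "S \<subseteq> (*\<^sub>v) A ` set (cols B)" using S(1) by (simp only: set_map)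
  then obtain U where U: "U \<subseteq> set (cols B)" "inj_on ((*\<^sub>v) A) U" "S = (*\<^sub>v) A ` U"
    unfolding subset_image_inj by blast
  obtain us where us: "set us = U" "distinct us"
    using finite_distinct_list finite_subset[OF U(1)] by blast
  have "U \<subseteq> carrier_vec k" using U(1) B cols_dim by blast
  define C where "C = mat_of_cols k us"
  have C: "C \<in> carrier_mat k (length us)" and cols_C: "cols C = us"
    using \<open>U \<subseteq> carrier_vec k\<close> us by (simp_all add: C_def)
  have AC: "A * C \<in> carrier_mat n (length us)" using A C by auto
  have "col C j = us ! j" if "j < length us" for j
    using that C cols_nth[of j C] by (simp add: cols_C)
  then have cols_AC: "cols (A * C) = map ((*\<^sub>v) A) us"
    using A C by (intro nth_equalityI) auto
  have "K.lin_indpt U"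
  proof
    assume "K.lin_dep U"
    then obtain v where v: "v \<in> carrier_vec (length us)" "v \<noteq> 0\<^sub>v (length us)" "C *\<^sub>v v = 0\<^sub>v k"
      using K.lin_depE[OF C] cols_C us by auto
    have "(A * C) *\<^sub>v v = A *\<^sub>v 0\<^sub>v k" using A C v by simp
    also have "\<dots> = 0\<^sub>v n" using A by (intro eq_vecI) auto
    finally have "(A * C) *\<^sub>v v = 0\<^sub>v n" .
    then have "N.lin_dep (set (cols (A * C)))"
      using N.lin_depI[OF AC v(1,2)] cols_AC us U(2) by (simp add: distinct_map)
    then show False using S(2) cols_AC us U(3) by simp
  qed
  then have "card U \<le> K.rank B" using K.rank_ge_card_indpt[OF B U(1)] by simp
  moreover have "card S = card U" using U(2,3) card_image by blast
  ultimately show ?thesis using N.rank_card_indpt[OF AB max] by simp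
qed

lemma rank_mat_mult_le_left:
  fixes A :: "'a::field mat"
  assumes A: "A \<in> carrier_mat n k" and B: "B \<in> carrier_mat k nc"
  shows "vec_space.rank n (A * B) \<le> vec_space.rank n A"
proof -
  interpret N: vec_space "TYPE('a)" n .
  have AB: "A * B \<in> carrier_mat n nc" using A B by auto
  define W where "W = N.span (set (cols A))"
  have Wsub: "subspace class_ring W N.V"
    unfolding W_def using N.span_is_subspace cols_dim[of A] A by auto
  have "set (cols (A * B)) \<subseteq> W"
  proof
    fix x assume "x \<in> set (cols (A * B))"
    then obtain j where "j < length (cols (A * B))" "x = cols (A * B) ! j"
      by (auto simp: in_set_conv_nth)
    then have j: "j < nc" "x = A *\<^sub>v col B j" using AB col_mult2[OF A B] by auto
    have "col B j \<in> carrier_vec k" using B j by auto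
    then have "x \<in> N.col_space A" using N.col_space_eq[OF A] j A by auto
    then show "x \<in> W" unfolding W_def N.col_space_def .
  qed
  then have sp: "N.span (set (cols (A * B))) \<subseteq> W"
    using N.span_is_subset Wsub unfolding subspace_def by blast
  have "subspace class_ring (N.span (set (cols (A * B)))) N.V"
    using N.span_is_subspace cols_dim[of "A * B"] A by auto
  then have subsp: "subspace class_ring (N.span (set (cols (A * B)))) (N.vs W)"
    using N.nested_subspaces[OF Wsub _ sp] by blast
  have fdW: "vectorspace.fin_dim class_ring (N.vs W)" unfolding W_def using N.fin_dim_span_cols A by blast
  have fdAB: "vectorspace.fin_dim class_ring (N.span_vs (set (cols (A * B))))" using N.fin_dim_span_cols AB by blast
  have "N.rank (A * B) \<le> vectorspace.dim class_ring (N.vs W)" unfolding N.rank_def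
    using vectorspace.subspace_dim[OF N.subspace_is_vs[OF Wsub] subsp fdW] fdAB by auto
  then show ?thesis unfolding N.rank_def W_def by simp
qed

definition block_sum_mat :: "nat \<Rightarrow> nat \<Rightarrow> 'a::zero_neq_one mat" where
  "block_sum_mat P m = mat m (P * m) (\<lambda>(a, x). if x div P = a then 1 else 0)"

definition block_head_mat :: "nat \<Rightarrow> nat \<Rightarrow> 'a::zero_neq_one mat" where
  "block_head_mat P m = mat (P * m) m (\<lambda>(x, a). if x = a * P then 1 else 0)"

text \<open>For i < (P - 1) m, the i-th row index that is not the first row of its block of P.\<close>

definition block_tail_index :: "nat \<Rightarrow> nat \<Rightarrow> nat" where
  "block_tail_index P i = i div (P - 1) * P + Suc (i mod (P - 1))"

definition block_tail_select_mat :: "nat \<Rightarrow> nat \<Rightarrow> 'a::zero_neq_one mat" where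
  "block_tail_select_mat P m =
     mat ((P - 1) * m) (P * m) (\<lambda>(i, x). if x = block_tail_index P i then 1 else 0)"

definition block_tail_lift_mat :: "nat \<Rightarrow> nat \<Rightarrow> 'a::ring_1 mat" where
  "block_tail_lift_mat P m =
     mat (P * m) ((P - 1) * m) (\<lambda>(x, i).
       (if x = block_tail_index P i then 1 else 0) - (if x = i div (P - 1) * P then 1 else 0))"

lemma block_tail_index_eq_iff:
  assumes "i < (P - 1) * m"
  shows "block_tail_index P i = x \<longleftrightarrow>
           x mod P \<noteq> 0 \<and> i = x div P * (P - 1) + (x mod P - 1)"
proof -
  define k where "k = P - 1"
  have "0 < k" using assms unfolding k_def by (metis gr_implies_not0 mult_0 neq0_conv)
  then have P: "P = Suc k" by (simp add: k_def)
  have mod_lt: "Suc (i mod k) < P" using \<open>0 < k\<close> P by simp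
  have "block_tail_index P i = x \<longleftrightarrow> x div P = i div k \<and> x mod P = Suc (i mod k)"
  proof
    assume "block_tail_index P i = x"
    moreover define r where "r = Suc (i mod k)"
    ultimately have "x = r + i div k * P" by (simp add: block_tail_index_def k_def)
    then show "x div P = i div k \<and> x mod P = Suc (i mod k)" using mod_lt by (simp add: r_def[symmetric])
  next
    assume "x div P = i div k \<and> x mod P = Suc (i mod k)"
    then show "block_tail_index P i = x"
      unfolding block_tail_index_def k_def[symmetric] by (metis div_mult_mod_eq)
  qed
  also have "\<dots> \<longleftrightarrow> x mod P \<noteq> 0 \<and> i = x div P * k + (x mod P - 1)"
  proof
    assume "x div P = i div k \<and> x mod P = Suc (i mod k)"
    then show "x mod P \<noteq> 0 \<and> i = x div P * k + (x mod P - 1)" by simp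
  next
    assume *: "x mod P \<noteq> 0 \<and> i = x div P * k + (x mod P - 1)"
    define t where "t = x mod P - 1"
    have "t < k" using P \<open>0 < k\<close> mod_less_divisor[of P x] unfolding t_def by linarith
    moreover have "i = t + x div P * k" "x mod P = Suc t" using * by (simp_all add: t_def)
    ultimately show "x div P = i div k \<and> x mod P = Suc (i mod k)" by simp
  qed
  finally show ?thesis by (simp add: k_def)
qed

lemma index_block_head_mat_mult_block_sum_mat:
  assumes "x < P * m" and "y < P * m"
  shows "(block_head_mat P m * block_sum_mat P m) $$ (x, y)
           = (if x = y div P * P then 1 else (0::'a::semiring_1))"
proof -
  have a: "y div P < m" using assms(2) by (simp add: less_mult_imp_div_less mult.commute)
  have "(block_head_mat P m * block_sum_mat P m) $$ (x, y)
      = (\<Sum>b<m. (if x = b * P then 1 else 0) * (if y div P = b then 1 else (0::'a)))"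
    using assms by (simp add: block_head_mat_def block_sum_mat_def scalar_prod_def lessThan_atLeast0)
  also have "\<dots> = (if x = y div P * P then 1 else 0)"
    using a by (simp add: if_distrib[of "\<lambda>t. _ * t"] sum.delta cong: if_cong)
  finally show ?thesis .
qed

lemma index_block_tail_lift_mat_mult_block_tail_select_mat:
  assumes "0 < P" and "x < P * m" and "y < P * m"
  shows "(block_tail_lift_mat P m * block_tail_select_mat P m) $$ (x, y)
           = (if y mod P = 0 then 0
              else (if x = y then 1 else 0) - (if x = y div P * P then 1 else (0::'a::ring_1)))"
proof -
  define g where "g i = (if x = block_tail_index P i then 1 else 0)
                        - (if x = i div (P - 1) * P then 1 else (0::'a))" for i
  define i0 where "i0 = y div P * (P - 1) + (y mod P - 1)"
  have sel: "block_tail_index P i = y \<longleftrightarrow> y mod P \<noteq> 0 \<and> i = i0" if "i < (P - 1) * m" for i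
    using block_tail_index_eq_iff[OF that] by (simp add: i0_def)
  have i0: "i0 < (P - 1) * m \<and> i0 div (P - 1) = y div P" if "y mod P \<noteq> 0"
  proof -
    have "y mod P - 1 < P - 1" using that mod_less_divisor[OF assms(1), of y] by linarith
    then have "i0 < Suc (y div P) * (P - 1)" and "i0 div (P - 1) = y div P"
      by (simp_all add: i0_def)
    moreover have "Suc (y div P) * (P - 1) \<le> (P - 1) * m"
      using assms(3) by (metis Suc_leI less_mult_imp_div_less mult.commute mult_le_mono1)
    ultimately show ?thesis by linarith
  qed
  have "(block_tail_lift_mat P m * block_tail_select_mat P m) $$ (x, y)
      = (\<Sum>i<(P - 1) * m. g i * (if block_tail_index P i = y then 1 else 0))"
    using assms by (simp add: block_tail_lift_mat_def block_tail_select_mat_def scalar_prod_def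
        lessThan_atLeast0 g_def eq_commute[of y])
  also have "\<dots> = (\<Sum>i<(P - 1) * m. if y mod P \<noteq> 0 \<and> i = i0 then g i else 0)"
    using sel by (intro sum.cong refl) auto
  also have "\<dots> = (if y mod P = 0 then 0 else g i0)"
    using i0 by auto
  also have "\<dots> = (if y mod P = 0 then 0
                    else (if x = y then 1 else 0) - (if x = y div P * P then 1 else 0))"
    using i0 sel[of i0] by (auto simp: g_def)
  finally show ?thesis .
qed

text \<open>The first row of each block is the block sum minus the other rows of the block, and every
  other row is kept as it is.\<close>

lemma one_mat_eq_block_head_sum_add_tail_lift_select:
  assumes "0 < P"
  shows "block_head_mat P m * block_sum_mat P m
           + block_tail_lift_mat P m * block_tail_select_mat P m = (1\<^sub>m (P * m) :: 'a::ring_1 mat)"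
proof (rule eq_matI)
  fix x y assume "x < dim_row (1\<^sub>m (P * m) :: 'a mat)" "y < dim_col (1\<^sub>m (P * m) :: 'a mat)"
  then have x: "x < P * m" and y: "y < P * m" by auto
  have dims: "dim_row (block_tail_lift_mat P m * block_tail_select_mat P m :: 'a mat) = P * m"
    "dim_col (block_tail_lift_mat P m * block_tail_select_mat P m :: 'a mat) = P * m"
    by (simp_all add: block_tail_lift_mat_def block_tail_select_mat_def)
  have "(block_head_mat P m * block_sum_mat P m
           + block_tail_lift_mat P m * block_tail_select_mat P m) $$ (x, y)
      = (if x = y div P * P then 1 else (0::'a))
        + (if y mod P = 0 then 0 else (if x = y then 1 else 0) - (if x = y div P * P then 1 else 0))"
    by (simp only: index_add_mat(1) dims x y index_block_head_mat_mult_block_sum_mat[OF x y]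
        index_block_tail_lift_mat_mult_block_tail_select_mat[OF assms x y])
  also have "\<dots> = (1\<^sub>m (P * m) :: 'a mat) $$ (x, y)"
    using x y by (auto simp flip: dvd_eq_mod_eq_0)
  finally show "(block_head_mat P m * block_sum_mat P m
           + block_tail_lift_mat P m * block_tail_select_mat P m) $$ (x, y)
      = (1\<^sub>m (P * m) :: 'a mat) $$ (x, y)" .
qed (auto simp: block_head_mat_def block_tail_lift_mat_def block_tail_select_mat_def)

lemma rank_le_block_sum_rank:
  fixes A :: "'a::field mat"
  assumes A: "A \<in> carrier_mat (P * m) N" and P: "0 < P"
  shows "vec_space.rank (P * m) A \<le> vec_space.rank m (block_sum_mat P m * A) + (P - 1) * m"
proof -
  let ?E = "block_head_mat P m :: 'a mat" and ?S = "block_sum_mat P m :: 'a mat"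
    and ?G = "block_tail_lift_mat P m :: 'a mat" and ?Q = "block_tail_select_mat P m :: 'a mat"
  have E: "?E \<in> carrier_mat (P * m) m" and S: "?S \<in> carrier_mat m (P * m)"
    and G: "?G \<in> carrier_mat (P * m) ((P - 1) * m)" and Q: "?Q \<in> carrier_mat ((P - 1) * m) (P * m)"
    by (simp_all add: block_head_mat_def block_sum_mat_def block_tail_lift_mat_def
        block_tail_select_mat_def)
  have SA: "?S * A \<in> carrier_mat m N" and QA: "?Q * A \<in> carrier_mat ((P - 1) * m) N"
    using S Q A by auto
  have "A = (?E * ?S + ?G * ?Q) * A"
    unfolding one_mat_eq_block_head_sum_add_tail_lift_select[OF P] using A by simp
  also have "\<dots> = ?E * ?S * A + ?G * ?Q * A"
    using E S G Q A by (intro add_mult_distrib_mat) auto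
  also have "\<dots> = ?E * (?S * A) + ?G * (?Q * A)"
    by (simp add: assoc_mult_mat[OF E S A] assoc_mult_mat[OF G Q A])
  finally have decomp: "A = ?E * (?S * A) + ?G * (?Q * A)" .
  have "vec_space.rank (P * m) A
      \<le> vec_space.rank (P * m) (?E * (?S * A)) + vec_space.rank (P * m) (?G * (?Q * A))"
    using vec_space.rank_subadditive[of "?E * (?S * A)" "P * m" N "?G * (?Q * A)"] E SA G QA
    by (subst decomp) auto
  also have "vec_space.rank (P * m) (?E * (?S * A)) \<le> vec_space.rank m (?S * A)"
    by (rule rank_mat_mult_le_right[OF E SA])
  also have "vec_space.rank (P * m) (?G * (?Q * A)) \<le> vec_space.rank (P * m) ?G"
    by (rule rank_mat_mult_le_left[OF G QA])
  also have "vec_space.rank (P * m) ?G \<le> (P - 1) * m"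
    by (rule vec_space.rank_le_nc[OF G])
  finally show ?thesis by simp
qed

lemma index_block_sum_mat_mult:
  fixes B :: "'a::semiring_1 mat"
  assumes "a < m" and "y < dim_col B" and "dim_row B = P * m"
  shows "(block_sum_mat P m * B) $$ (a, y) = (\<Sum>s<P. B $$ (a * P + s, y))"
proof -
  have block: "{x \<in> {..<P * m}. x div P = a} = (\<lambda>s. a * P + s) ` {..<P}"
  proof (intro equalityI subsetI)
    fix x assume "x \<in> {x \<in> {..<P * m}. x div P = a}"
    then have "x div P = a" and "0 < P" by (auto intro: gr0I)
    then show "x \<in> (\<lambda>s. a * P + s) ` {..<P}"
      by (intro image_eqI[of _ _ "x mod P"]) (auto simp: mult.commute)
  next
    fix x assume "x \<in> (\<lambda>s. a * P + s) ` {..<P}"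
    then obtain s where s: "s < P" "x = a * P + s" by auto
    have "a * P + s < Suc a * P" using s by simp
    also have "\<dots> \<le> P * m" using assms by (metis Suc_leI mult.commute mult_le_mono1)
    finally show "x \<in> {x \<in> {..<P * m}. x div P = a}" using s by auto
  qed
  have "(block_sum_mat P m * B) $$ (a, y) = (\<Sum>x<P * m. (if x div P = a then 1 else 0) * B $$ (x, y))"
    using assms by (simp add: block_sum_mat_def scalar_prod_def lessThan_atLeast0)
  also have "\<dots> = (\<Sum>x<P * m. if x div P = a then B $$ (x, y) else 0)"
    by (intro sum.cong) auto
  also have "\<dots> = (\<Sum>x \<in> {x \<in> {..<P * m}. x div P = a}. B $$ (x, y))"
    by (rule sum.inter_filter[symmetric]) simp
  also have "\<dots> = (\<Sum>s<P. B $$ (a * P + s, y))"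
    unfolding block by (simp add: sum.reindex)
  finally show ?thesis .
qed

lemma index_mult_block_sum_mat:
  fixes A :: "'a::semiring_1 mat"
  assumes "i < dim_row A" and "y < P * dim_col A"
  shows "(A * block_sum_mat P (dim_col A)) $$ (i, y) = A $$ (i, y div P)"
proof -
  have "y div P < dim_col A" using assms(2) by (simp add: less_mult_imp_div_less mult.commute)
  have "(A * block_sum_mat P (dim_col A)) $$ (i, y)
      = (\<Sum>b<dim_col A. A $$ (i, b) * (if y div P = b then 1 else 0))"
    using assms by (simp add: block_sum_mat_def scalar_prod_def lessThan_atLeast0)
  also have "\<dots> = (\<Sum>b<dim_col A. if b = y div P then A $$ (i, b) else 0)"
    by (intro sum.cong) auto
  also have "\<dots> = A $$ (i, y div P)"
    using \<open>y div P < dim_col A\<close> by simp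
  finally show ?thesis .
qed

lemma sum_permutes_indicator:
  fixes P :: nat
  assumes "\<sigma> permutes {..<P}" and "c < P"
  shows "(\<Sum>r<P. if \<sigma> r = c then 1 else 0) = (1 :: 'a::comm_semiring_1)"
proof -
  have "(\<Sum>r<P. if \<sigma> r = c then 1 else 0) = (\<Sum>t<P. if t = c then 1 else (0::'a))"
    using sum.permute[OF assms(1), of "\<lambda>t. if t = c then 1 else (0::'a)"] by (simp add: o_def)
  also have "\<dots> = 1" using assms(2) by (subst sum.delta) auto
  finally show ?thesis .
qed

lemma block_row_sum_perm_lift:
  assumes "is_perm_lift P H Hh" and "a < dim_row H" and "b < dim_col H" and "c < P"
  shows "(\<Sum>s<P. Hh $$ (a * P + s, b * P + c)) = H $$ (a, b)"
proof -
  obtain \<sigma> where perm: "H $$ (a, b) \<noteq> 0 \<Longrightarrow> \<sigma> permutes {..<P}"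
    and entry: "\<And>r. r < P \<Longrightarrow> Hh $$ (a * P + r, b * P + c) =
         (if H $$ (a, b) = 0 then 0 else if \<sigma> r = c then 1 else 0)"
    using assms unfolding is_perm_lift_def by blast
  show ?thesis
  proof (cases "H $$ (a, b) = 0")
    case False
    then have "H $$ (a, b) = 1" by (simp add: bit_not_zero_iff)
    then show ?thesis using entry sum_permutes_indicator[OF perm \<open>c < P\<close>] False by simp
  qed (simp add: entry)
qed

lemma block_sum_mat_mult_perm_lift:
  assumes "is_perm_lift P H Hh"
  shows "block_sum_mat P (dim_row H) * Hh = H * block_sum_mat P (dim_col H)"
proof (rule eq_matI)
  have Hh: "Hh \<in> carrier_mat (P * dim_row H) (P * dim_col H)"
    using assms unfolding is_perm_lift_def by blast
  fix a y
  assume "a < dim_row (H * block_sum_mat P (dim_col H))" "y < dim_col (H * block_sum_mat P (dim_col H))"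
  then have a: "a < dim_row H" and y: "y < P * dim_col H" by (simp_all add: block_sum_mat_def)
  define b where "b = y div P"
  have b: "b < dim_col H" using y by (simp add: b_def less_mult_imp_div_less mult.commute)
  have "0 < P" using y by (metis mult_0 not_less0 neq0_conv)
  then have y_eq: "y = b * P + y mod P" and c: "y mod P < P" by (simp_all add: b_def)
  have "(block_sum_mat P (dim_row H) * Hh) $$ (a, y) = (\<Sum>s<P. Hh $$ (a * P + s, y))"
    using a y Hh by (simp add: index_block_sum_mat_mult)
  also have "\<dots> = H $$ (a, b)"
    using block_row_sum_perm_lift[OF assms a b c] by (simp flip: y_eq)
  also have "\<dots> = (H * block_sum_mat P (dim_col H)) $$ (a, y)"
    using a y by (simp add: index_mult_block_sum_mat b_def)
  finally show "(block_sum_mat P (dim_row H) * Hh) $$ (a, y) = (H * block_sum_mat P (dim_col H)) $$ (a, y)" .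
qed (use assms in \<open>auto simp: block_sum_mat_def is_perm_lift_def\<close>)

lemma rk_perm_lift_le:
  assumes "is_perm_lift P H Hh" and "0 < P"
  shows "rk Hh \<le> rk H + (P - 1) * dim_row H"
proof -
  have Hh: "Hh \<in> carrier_mat (P * dim_row H) (P * dim_col H)"
    using assms unfolding is_perm_lift_def by blast
  have H: "H \<in> carrier_mat (dim_row H) (dim_col H)" by simp
  have F: "block_sum_mat P (dim_col H) \<in> carrier_mat (dim_col H) (P * dim_col H)"
    by (simp add: block_sum_mat_def)
  have "rk Hh \<le> vec_space.rank (dim_row H) (block_sum_mat P (dim_row H) * Hh) + (P - 1) * dim_row H"
    using rank_le_block_sum_rank[OF Hh assms(2)] Hh by (simp add: rk_def)
  also have "vec_space.rank (dim_row H) (block_sum_mat P (dim_row H) * Hh) \<le> rk H"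
    unfolding block_sum_mat_mult_perm_lift[OF assms(1)] rk_def by (rule rank_mat_mult_le_left[OF H F])
  finally show ?thesis by simp
qed

theorem mainTheorem5:
  fixes HX HZ HXh HZh :: "bit mat" and mX mZ n P :: nat
  assumes "HX \<in> carrier_mat mX n" and "HZ \<in> carrier_mat mZ n"
    and "P \<ge> 1"
    and "is_perm_lift P HX HXh" and "is_perm_lift P HZ HZh"
    and "HXh * transpose_mat HZh = 0\<^sub>m (P * mX) (P * mZ)"
  shows "int (P * n) - int (rk HXh) - int (rk HZh)
           \<ge> (int n - int (rk HX) - int (rk HZ))
              + (int P - 1) * (int n - int mX - int mZ)"
proof -
  have "rk HXh \<le> rk HX + (P - 1) * mX" and "rk HZh \<le> rk HZ + (P - 1) * mZ"
    using rk_perm_lift_le[OF assms(4)] rk_perm_lift_le[OF assms(5)] assms(1-3) by auto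
  then have "int (rk HXh) \<le> int (rk HX) + int (P - 1) * int mX"
    and "int (rk HZh) \<le> int (rk HZ) + int (P - 1) * int mZ"
    by (simp_all flip: of_nat_add of_nat_mult)
  moreover have "int (P - 1) = int P - 1" using assms(3) by (simp add: of_nat_diff)
  ultimately show ?thesis by (simp add: algebra_simps)
qed

end
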